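(* Let $N\ge 5$ be odd, and let $G_{N,1}$ be the graph with vertex set $\mathbb Z_N$ in which two distinct vertices $i,j$ are adjacent if and only if $j-i\not\equiv\pm1\pmod N$. Put $\Delta=\sqrt{N(N-4)}$ and $\rho=\frac{N-2+\Delta}{2}$. Then the number of spanning trees of $G_{N,1}$ is \[ \tau(G_{N,1})=\frac{1}{N}\,\frac{(\rho^N+1)^2}{\rho^{N-1}(\rho+1)^2}. \] *)

theory Defs
  imports Complex_Main
begin

definition edge_rel :: "'a set set \<Rightarrow> ('a \<times> 'a) set" where
  "edge_rel T = {(x, y). {x, y} \<in> T}"

definition graph_connected :: "'a set \<Rightarrow> 'a set set \<Rightarrow> bool" where
  "graph_connected V T \<longleftrightarrow> (\<forall>u\<in>V. \<forall>v\<in>V. (u, v) \<in> (edge_rel T)\<^sup>*)"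

definition has_cycle :: "'a set set \<Rightarrow> bool" where
  "has_cycle T \<longleftrightarrow> (\<exists>vs. length vs \<ge> 3 \<and> distinct vs \<and>
      (\<forall>i. Suc i < length vs \<longrightarrow> {vs ! i, vs ! Suc i} \<in> T) \<and> {last vs, hd vs} \<in> T)"

definition spanning_tree :: "'a set \<Rightarrow> 'a set set \<Rightarrow> 'a set set \<Rightarrow> bool" where
  "spanning_tree V E T \<longleftrightarrow> T \<subseteq> E \<and> graph_connected V T \<and> \<not> has_cycle T"

definition num_spanning_trees :: "'a set \<Rightarrow> 'a set set \<Rightarrow> nat" where
  "num_spanning_trees V E = card {T. spanning_tree V E T}"

definition GN1_vertices :: "nat \<Rightarrow> nat set" where
  "GN1_vertices N = {0..<N}"

definition GN1_edges :: "nat \<Rightarrow> nat set set" where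
  "GN1_edges N = {{i, j} | i j. i < N \<and> j < N \<and> i \<noteq> j \<and>
      (int j - int i) mod int N \<noteq> 1 mod int N \<and> (int j - int i) mod int N \<noteq> (-1) mod int N}"

end

theory Submission
  imports Defs "Jordan_Normal_Form.Determinant" "HOL-Library.FuncSet"
    "HOL-Computational_Algebra.Fundamental_Theorem_Algebra"
begin

text \<open>By Kirchhoff's matrix-tree theorem the number of spanning trees of a graph on N vertices with
  Laplacian L is det (L + J) / N^2, J the all-ones matrix. The theorem itself is proved by expanding the
  reduced Laplacian row by row: spanning trees correspond to maps sending every non-root vertex to a
  neighbouring parent, and det (I - P) is 1 for the matrix P of an acyclic parent map and 0 otherwise.

  For G_{N,1}, the complement of the N-cycle, L + J = (N - 2) I + A(C_N) is circulant, with eigenvalues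
  N - 2 + w^k + w^-k for w = exp (2 pi i / N). Since rho + 1/rho = N - 2, each of them equals
  (rho + w^k) (rho + w^-k) / rho, and the product of rho + w^k over k is rho^N + 1 when N is odd.
  Hence the count is (rho^N + 1)^2 / (N^2 rho^N), which is the claimed value because (rho + 1)^2 = N rho.\<close>

section \<open>Paths and cycles\<close>

lemma edge_rel_iff [simp]: "(x, y) \<in> edge_rel T \<longleftrightarrow> {x, y} \<in> T"
  unfolding edge_rel_def by auto

lemma edge_rel_mono: "T \<subseteq> T' \<Longrightarrow> edge_rel T \<subseteq> edge_rel T'"
  unfolding edge_rel_def by auto

lemma converse_edge_rel [simp]: "(edge_rel T)\<inverse> = edge_rel T"
  unfolding edge_rel_def by (auto simp: insert_commute)

lemma rtrancl_edge_rel_sym: "(x, y) \<in> (edge_rel T)\<^sup>* \<Longrightarrow> (y, x) \<in> (edge_rel T)\<^sup>*"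
  by (metis converse_edge_rel rtrancl_converseI)

lemma rtrancl_imp_distinct_path:
  assumes "(u, w) \<in> R\<^sup>*"
  shows "\<exists>vs. vs \<noteq> [] \<and> hd vs = u \<and> last vs = w \<and> distinct vs \<and>
           (\<forall>i. Suc i < length vs \<longrightarrow> (vs ! i, vs ! Suc i) \<in> R)"
  using assms
proof (induction rule: rtrancl_induct)
  case base
  show ?case by (intro exI[of _ "[u]"]) auto
next
  case (step b c)
  then obtain vs where vs: "vs \<noteq> []" "hd vs = u" "last vs = b" "distinct vs"
    "\<forall>i. Suc i < length vs \<longrightarrow> (vs ! i, vs ! Suc i) \<in> R" by blast
  show ?case
  proof (cases "c \<in> set vs")
    case True
    then obtain j where j: "j < length vs" "vs ! j = c" by (auto simp: in_set_conv_nth)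
    have "last (take (Suc j) vs) = c"
      using j by (subst last_conv_nth) auto
    then show ?thesis
      using vs j by (intro exI[of _ "take (Suc j) vs"]) (auto simp: hd_take)
  next
    case False
    have "((vs @ [c]) ! i, (vs @ [c]) ! Suc i) \<in> R" if "Suc i < length (vs @ [c])" for i
    proof (cases "Suc i < length vs")
      case True
      then show ?thesis using vs(5) by (simp add: nth_append)
    next
      case False
      with that have "Suc i = length vs" by simp
      moreover from this have "vs ! i = b" using vs(1,3) by (metis diff_Suc_1 last_conv_nth)
      ultimately show ?thesis using step(2) by (simp add: nth_append)
    qed
    then show ?thesis
      using vs False by (intro exI[of _ "vs @ [c]"]) auto
  qed
qed

lemma path_avoiding_edge_imp_has_cycle:
  assumes uv: "{u, v} \<in> T" "u \<noteq> v" and path: "(u, v) \<in> (edge_rel (T - {{u, v}}))\<^sup>*"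
  shows "has_cycle T"
proof -
  obtain vs where vs: "vs \<noteq> []" "hd vs = u" "last vs = v" "distinct vs"
    "\<forall>i. Suc i < length vs \<longrightarrow> (vs ! i, vs ! Suc i) \<in> edge_rel (T - {{u, v}})"
    using rtrancl_imp_distinct_path[OF path] by blast
  have "length vs \<noteq> 1"
    using vs uv(2) by (metis One_nat_def last_conv_nth hd_conv_nth diff_Suc_1 zero_less_one)
  moreover have "length vs \<noteq> 2"
  proof
    assume len: "length vs = 2"
    then have "vs ! 0 = u" "vs ! 1 = v" using vs by (simp_all add: hd_conv_nth last_conv_nth)
    then show False using vs(5) len by auto
  qed
  moreover have "length vs \<noteq> 0" using vs(1) by simp
  ultimately have "length vs \<ge> 3" by presburger
  moreover have "\<forall>i. Suc i < length vs \<longrightarrow> {vs ! i, vs ! Suc i} \<in> T"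
    using vs(5) by auto
  moreover have "{last vs, hd vs} \<in> T" using vs uv by (simp add: insert_commute)
  ultimately show ?thesis unfolding has_cycle_def using vs(4) by blast
qed

lemma has_cycle_imp_path_avoiding_edge:
  assumes "has_cycle T"
  shows "\<exists>u v. {u, v} \<in> T \<and> u \<noteq> v \<and> (u, v) \<in> (edge_rel (T - {{u, v}}))\<^sup>*"
proof -
  obtain vs where vs: "length vs \<ge> 3" "distinct vs"
    "\<forall>i. Suc i < length vs \<longrightarrow> {vs ! i, vs ! Suc i} \<in> T" "{last vs, hd vs} \<in> T"
    using assms unfolding has_cycle_def by blast
  define k where "k = length vs - 1"
  define e where "e = {vs ! 0, vs ! k}"
  have k: "2 \<le> k" "k < length vs" using vs(1) by (auto simp: k_def)
  have "vs \<noteq> []" using vs(1) by auto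
  then have "hd vs = vs ! 0" "last vs = vs ! k"
    by (auto simp: hd_conv_nth last_conv_nth k_def)
  then have "e \<in> T" using vs(4) by (simp add: e_def insert_commute)
  have distinct_ends: "vs ! 0 \<noteq> vs ! k"
    using vs(2) k by (subst nth_eq_iff_index_eq) auto
  have "(vs ! 0, vs ! i) \<in> (edge_rel (T - {e}))\<^sup>*" if "i \<le> k" for i
    using that
  proof (induction i)
    case 0
    show ?case by simp
  next
    case (Suc i)
    have "{vs ! i, vs ! Suc i} \<noteq> e"
    proof
      assume "{vs ! i, vs ! Suc i} = e"
      then have "vs ! i = vs ! 0 \<and> vs ! Suc i = vs ! k \<or> vs ! i = vs ! k \<and> vs ! Suc i = vs ! 0"
        by (auto simp: e_def doubleton_eq_iff)
      moreover have "i < length vs" "Suc i < length vs" "0 < length vs"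
        using Suc.prems k by auto
      ultimately have "i = 0 \<and> Suc i = k \<or> i = k \<and> Suc i = 0"
        using vs(2) k(2) by (metis nth_eq_iff_index_eq)
      then show False using k by auto
    qed
    moreover have "{vs ! i, vs ! Suc i} \<in> T" using vs(3) Suc.prems k by simp
    ultimately have "(vs ! i, vs ! Suc i) \<in> edge_rel (T - {e})" by simp
    with Suc show ?case by (meson Suc_leD rtrancl.rtrancl_into_rtrancl)
  qed
  then show ?thesis using \<open>e \<in> T\<close> distinct_ends unfolding e_def by blast
qed

definition simple_graph :: "'a set \<Rightarrow> 'a set set \<Rightarrow> bool" where
  "simple_graph V E \<longleftrightarrow> (\<forall>e\<in>E. \<exists>u v. e = {u, v} \<and> u \<in> V \<and> v \<in> V \<and> u \<noteq> v)"

lemma simple_graph_subset: "simple_graph V E \<Longrightarrow> T \<subseteq> E \<Longrightarrow> simple_graph V T"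
  unfolding simple_graph_def by blast

lemma connected_subgraph_of_acyclic_eq:
  assumes "simple_graph V T" "S \<subseteq> T" "graph_connected V S" "\<not> has_cycle T"
  shows "S = T"
proof (rule ccontr)
  assume "S \<noteq> T"
  then obtain e where e: "e \<in> T" "e \<notin> S" using assms(2) by blast
  then obtain u v where uv: "e = {u, v}" "u \<in> V" "v \<in> V" "u \<noteq> v"
    using assms(1) unfolding simple_graph_def by blast
  have "(u, v) \<in> (edge_rel S)\<^sup>*" using assms(3) uv unfolding graph_connected_def by blast
  also have "\<dots> \<subseteq> (edge_rel (T - {{u, v}}))\<^sup>*"
    using assms(2) e uv(1) by (intro rtrancl_mono edge_rel_mono) blast
  finally have "has_cycle T"
    using e uv by (intro path_avoiding_edge_imp_has_cycle) auto
  with assms(4) show False ..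
qed

section \<open>Spanning trees as parent maps\<close>

text \<open>A parent map f sends each vertex i < n to a neighbour f i \<le> n; acyclicity means that no
  nonempty set of non-root vertices is closed under f, i.e. every vertex reaches the root n.\<close>

definition acyclic_map :: "nat \<Rightarrow> (nat \<Rightarrow> nat) \<Rightarrow> bool" where
  "acyclic_map n f \<longleftrightarrow> (\<forall>S \<subseteq> {0..<n}. S \<noteq> {} \<longrightarrow> (\<exists>x\<in>S. f x \<notin> S))"

definition parent_edges :: "nat \<Rightarrow> (nat \<Rightarrow> nat) \<Rightarrow> nat set set" where
  "parent_edges n f = (\<lambda>i. {i, f i}) ` {0..<n}"

definition parent_maps :: "nat \<Rightarrow> nat set set \<Rightarrow> (nat \<Rightarrow> nat) set" where
  "parent_maps n E = {f \<in> (\<Pi>\<^sub>E i\<in>{0..<n}. {0..<Suc n} - {i}). (\<forall>i<n. {i, f i} \<in> E) \<and> acyclic_map n f}"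

lemma acyclic_mapD:
  assumes "acyclic_map n f" "S \<subseteq> {0..<n}" "\<And>y. y \<in> S \<Longrightarrow> f y \<in> S"
  shows "S = {}"
  using assms unfolding acyclic_map_def by blast

lemma parent_edges_reach_root:
  assumes f: "\<forall>i<n. f i \<in> {0..<Suc n} - {i}" and acyclic: "acyclic_map n f" and i: "i < Suc n"
  shows "(i, n) \<in> (edge_rel (parent_edges n f))\<^sup>*"
proof -
  let ?R = "edge_rel (parent_edges n f)"
  let ?S = "{i. i < n \<and> (i, n) \<notin> ?R\<^sup>*}"
  have closed: "f y \<in> ?S" if y: "y \<in> ?S" for y
  proof (cases "f y = n")
    case True
    have "(y, f y) \<in> ?R" using y unfolding parent_edges_def by auto
    with True y show ?thesis by auto
  next
    case False
    have "(f y, n) \<notin> ?R\<^sup>*"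
    proof
      assume "(f y, n) \<in> ?R\<^sup>*"
      moreover have "(y, f y) \<in> ?R" using y unfolding parent_edges_def by auto
      ultimately have "(y, n) \<in> ?R\<^sup>*" by (rule converse_rtrancl_into_rtrancl[rotated])
      with y show False by simp
    qed
    moreover have "f y < n" using f y False by auto
    ultimately show ?thesis by simp
  qed
  have "?S = {}" by (rule acyclic_mapD[OF acyclic _ closed]) auto
  then have "i \<notin> ?S" by blast
  with i show ?thesis by (cases "i = n") simp_all
qed

lemma graph_connected_parent_edges:
  assumes "\<forall>i<n. f i \<in> {0..<Suc n} - {i}" and "acyclic_map n f"
  shows "graph_connected {0..<Suc n} (parent_edges n f)"
  unfolding graph_connected_def
proof (intro ballI)
  fix u v assume "u \<in> {0..<Suc n}" "v \<in> {0..<Suc n}"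
  then have "(u, n) \<in> (edge_rel (parent_edges n f))\<^sup>*" "(n, v) \<in> (edge_rel (parent_edges n f))\<^sup>*"
    using parent_edges_reach_root[OF assms] rtrancl_edge_rel_sym[OF parent_edges_reach_root[OF assms]]
    by auto
  then show "(u, v) \<in> (edge_rel (parent_edges n f))\<^sup>*" by (rule rtrancl_trans)
qed

definition parent_rel :: "nat \<Rightarrow> (nat \<Rightarrow> nat) \<Rightarrow> nat rel" where
  "parent_rel n f = {(y, f y) | y. y < n}"

lemma parent_rel_iff [simp]: "(a, b) \<in> parent_rel n f \<longleftrightarrow> a < n \<and> b = f a"
  unfolding parent_rel_def by auto

lemma parent_step_below:
  "(w, x) \<in> (parent_rel n f)\<^sup>* \<Longrightarrow> w \<noteq> x \<Longrightarrow> (f w, x) \<in> (parent_rel n f)\<^sup>*"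
  by (metis parent_rel_iff converse_rtranclE)

lemma parent_not_below:
  assumes acyclic: "acyclic_map n f" and x: "x < n"
  shows "(f x, x) \<notin> (parent_rel n f)\<^sup>*"
proof
  assume fx_below: "(f x, x) \<in> (parent_rel n f)\<^sup>*"
  define S where "S = {y. (x, y) \<in> (parent_rel n f)\<^sup>* \<and> (y, x) \<in> (parent_rel n f)\<^sup>*}"
  have "S \<subseteq> {0..<n}"
  proof
    fix y assume "y \<in> S"
    then have "(y, x) \<in> (parent_rel n f)\<^sup>*" unfolding S_def by simp
    then show "y \<in> {0..<n}" using x by (cases rule: converse_rtranclE) auto
  qed
  moreover have "f y \<in> S" if "y \<in> S" for y
  proof -
    have "y < n" using that \<open>S \<subseteq> {0..<n}\<close> by auto
    then have "(x, f y) \<in> (parent_rel n f)\<^sup>*"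
      using that unfolding S_def by (auto intro: rtrancl_into_rtrancl)
    moreover have "(f y, x) \<in> (parent_rel n f)\<^sup>*"
      using that fx_below parent_step_below unfolding S_def by (cases "y = x") auto
    ultimately show ?thesis unfolding S_def by simp
  qed
  ultimately have "S = {}" by (rule acyclic_mapD[OF acyclic])
  moreover have "x \<in> S" unfolding S_def by simp
  ultimately show False by blast
qed

lemma connected_avoiding_parent_edge_imp_below:
  assumes "(x, b) \<in> (edge_rel (parent_edges n f - {{x, f x}}))\<^sup>*"
  shows "(b, x) \<in> (parent_rel n f)\<^sup>*"
  using assms
proof (induction rule: rtrancl_induct)
  case base
  show ?case by simp
next
  case (step y z)
  then have yz: "{y, z} \<in> parent_edges n f" "{y, z} \<noteq> {x, f x}" by auto
  from yz(1) obtain w where w: "w \<in> {0..<n}" "{y, z} = {w, f w}"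
    unfolding parent_edges_def by (rule imageE)
  with yz(2) have "w \<noteq> x" by auto
  from w(2) have "y = w \<and> z = f w \<or> y = f w \<and> z = w" by (auto simp: doubleton_eq_iff)
  then show ?case
    using step.IH \<open>w \<noteq> x\<close> parent_step_below w(1)
    by (auto intro: converse_rtrancl_into_rtrancl)
qed

lemma parent_edge_is_bridge:
  assumes "acyclic_map n f" and "x < n"
  shows "(x, f x) \<notin> (edge_rel (parent_edges n f - {{x, f x}}))\<^sup>*"
  using connected_avoiding_parent_edge_imp_below parent_not_below[OF assms] by blast

lemma parent_edges_acyclic:
  assumes acyclic: "acyclic_map n f"
  shows "\<not> has_cycle (parent_edges n f)"
proof
  assume "has_cycle (parent_edges n f)"
  then obtain u v where uv: "{u, v} \<in> parent_edges n f" "u \<noteq> v"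
      "(u, v) \<in> (edge_rel (parent_edges n f - {{u, v}}))\<^sup>*"
    using has_cycle_imp_path_avoiding_edge by blast
  then obtain x where x: "x < n" "{u, v} = {x, f x}" unfolding parent_edges_def by auto
  then have "u = x \<and> v = f x \<or> u = f x \<and> v = x" by (simp add: doubleton_eq_iff)
  then have "(x, f x) \<in> (edge_rel (parent_edges n f - {{x, f x}}))\<^sup>*"
    using uv(3) x(2) rtrancl_edge_rel_sym by metis
  with parent_edge_is_bridge[OF acyclic x(1)] show False ..
qed

lemma parent_maps_range: "f \<in> parent_maps n E \<Longrightarrow> \<forall>i<n. f i \<in> {0..<Suc n} - {i}"
  unfolding parent_maps_def by (auto simp: PiE_iff)

lemma spanning_tree_parent_edges:
  assumes "f \<in> parent_maps n E"
  shows "spanning_tree {0..<Suc n} E (parent_edges n f)"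
proof -
  have "acyclic_map n f" "parent_edges n f \<subseteq> E"
    using assms unfolding parent_maps_def parent_edges_def by auto
  then show ?thesis unfolding spanning_tree_def
    using graph_connected_parent_edges parent_edges_acyclic parent_maps_range[OF assms] by auto
qed

text \<open>Two parent maps with the same edge set agree: where they differ, g x is a vertex whose
  f-parent is x, and then g differs from f at g x as well, so the set of disagreement is closed under g.\<close>

lemma inj_on_parent_edges: "inj_on (parent_edges n) (parent_maps n E)"
proof (rule inj_onI)
  fix f g assume f: "f \<in> parent_maps n E" and g: "g \<in> parent_maps n E"
    and eq: "parent_edges n f = parent_edges n g"
  have acyclic: "acyclic_map n g" using g unfolding parent_maps_def by auto
  define K where "K = {x. x < n \<and> f x \<noteq> g x}"
  have closed: "g x \<in> K" if "x \<in> K" for x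
  proof -
    have "x < n" using that unfolding K_def by simp
    then have "{x, g x} \<in> parent_edges n g" unfolding parent_edges_def by simp
    then have "{x, g x} \<in> parent_edges n f" using eq by simp
    then obtain y where y: "y \<in> {0..<n}" "{x, g x} = {y, f y}" unfolding parent_edges_def by (rule imageE)
    then have gx: "g x = y" "f y = x" using that unfolding K_def by (auto simp: doubleton_eq_iff)
    have "g y \<noteq> f y"
    proof
      assume "g y = f y"
      then have "\<And>z. z \<in> {x, g x} \<Longrightarrow> g z \<in> {x, g x}" using gx by auto
      moreover have "{x, g x} \<subseteq> {0..<n}" using that gx y unfolding K_def by auto
      ultimately have "{x, g x} = {}" by (rule acyclic_mapD[OF acyclic, rotated])
      then show False by simp
    qed
    then show ?thesis using gx y unfolding K_def by simp
  qed
  have "K = {}" by (rule acyclic_mapD[OF acyclic _ closed]) (auto simp: K_def)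
  then have "\<forall>x<n. f x = g x" unfolding K_def by blast
  moreover have "f \<in> extensional {0..<n}" "g \<in> extensional {0..<n}"
    using f g unfolding parent_maps_def by (auto simp: PiE_iff)
  ultimately show "f = g" by (intro extensionalityI) auto
qed

definition root_dist :: "'a set set \<Rightarrow> 'a \<Rightarrow> 'a \<Rightarrow> nat" where
  "root_dist T r i = (LEAST k. (i, r) \<in> edge_rel T ^^ k)"

lemma closer_neighbour:
  assumes "(i, r) \<in> (edge_rel T)\<^sup>*" "i \<noteq> r"
  shows "\<exists>j. {i, j} \<in> T \<and> root_dist T r j < root_dist T r i"
proof -
  have d: "(i, r) \<in> edge_rel T ^^ root_dist T r i"
    using assms(1) unfolding root_dist_def rtrancl_power by (rule LeastI_ex)
  then obtain m where m: "root_dist T r i = Suc m" using assms(2) by (cases "root_dist T r i") auto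
  then obtain j where j: "(i, j) \<in> edge_rel T" "(j, r) \<in> edge_rel T ^^ m" using d by (metis relpow_Suc_E2)
  have "root_dist T r j \<le> m" unfolding root_dist_def using j(2) by (rule Least_le)
  then show ?thesis using j m by auto
qed

lemma connected_imp_parent_map:
  assumes simple: "simple_graph {0..<Suc n} T" and connected: "graph_connected {0..<Suc n} T"
  obtains f where "f \<in> parent_maps n T"
proof -
  let ?dist = "root_dist T n"
  have "\<exists>j. {i, j} \<in> T \<and> ?dist j < ?dist i" if "i < n" for i
    by (rule closer_neighbour) (use that connected in \<open>auto simp: graph_connected_def\<close>)
  then have "\<forall>i. \<exists>j. i < n \<longrightarrow> {i, j} \<in> T \<and> ?dist j < ?dist i" by blast
  from choice[OF this] obtain p where p: "\<And>i. i < n \<Longrightarrow> {i, p i} \<in> T \<and> ?dist (p i) < ?dist i"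
    by blast
  define f where "f = restrict p {0..<n}"
  have "f i \<in> {0..<Suc n} - {i}" if i: "i < n" for i
  proof -
    obtain a b where "{i, f i} = {a, b}" "a < Suc n" "b < Suc n" "a \<noteq> b"
      using simple p[OF i] i unfolding simple_graph_def f_def by fastforce
    then show ?thesis by (auto simp: doubleton_eq_iff)
  qed
  moreover have "acyclic_map n f"
    unfolding acyclic_map_def
  proof (intro allI impI)
    fix S assume S: "S \<subseteq> {0..<n}" "S \<noteq> {}"
    obtain y where y: "y \<in> S" "\<forall>z\<in>S. ?dist y \<le> ?dist z"
      using ex_has_least_nat[of "\<lambda>z. z \<in> S" _ ?dist] S(2) by blast
    then have "?dist (f y) < ?dist y" using p S unfolding f_def by auto
    then show "\<exists>x\<in>S. f x \<notin> S" using y by (meson not_le)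
  qed
  ultimately have "f \<in> parent_maps n T"
    using p unfolding parent_maps_def f_def by (auto simp: PiE_iff)
  then show thesis by (rule that)
qed

lemma spanning_tree_imp_parent_edges:
  assumes "simple_graph {0..<Suc n} E" and "spanning_tree {0..<Suc n} E T"
  shows "T \<in> parent_edges n ` parent_maps n E"
proof -
  have T: "T \<subseteq> E" "graph_connected {0..<Suc n} T" "\<not> has_cycle T"
    using assms(2) unfolding spanning_tree_def by auto
  have simple: "simple_graph {0..<Suc n} T" using simple_graph_subset assms(1) T(1) .
  obtain f where f: "f \<in> parent_maps n T" using connected_imp_parent_map[OF simple T(2)] .
  then have "parent_edges n f \<subseteq> T" unfolding parent_maps_def parent_edges_def by auto
  then have "parent_edges n f = T"
    using connected_subgraph_of_acyclic_eq[OF simple] graph_connected_parent_edges T(3)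
      parent_maps_range[OF f] f by (auto simp: parent_maps_def)
  moreover have "f \<in> parent_maps n E" using f T(1) unfolding parent_maps_def by auto
  ultimately show ?thesis by blast
qed

lemma card_spanning_trees_eq_card_parent_maps:
  assumes "simple_graph {0..<Suc n} E"
  shows "card {T. spanning_tree {0..<Suc n} E T} = card (parent_maps n E)"
proof -
  have "parent_edges n ` parent_maps n E = {T. spanning_tree {0..<Suc n} E T}"
    using spanning_tree_parent_edges spanning_tree_imp_parent_edges[OF assms] by blast
  then show ?thesis using card_image[OF inj_on_parent_edges] by metis
qed

section \<open>The matrix-tree theorem\<close>

definition adj :: "nat set set \<Rightarrow> nat \<Rightarrow> nat \<Rightarrow> 'a::zero_neq_one" where
  "adj E i j = (if {i, j} \<in> E then 1 else 0)"

definition laplacian :: "nat \<Rightarrow> nat set set \<Rightarrow> 'a::comm_ring_1 mat" where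
  "laplacian N E = mat N N (\<lambda>(i, k). if i = k then (\<Sum>j\<in>{0..<N} - {i}. adj E i j) else - adj E i k)"

text \<open>The reduced Laplacian of the functional digraph with arcs i \<rightarrow> f i, with the root n deleted.\<close>

definition functional_laplacian :: "nat \<Rightarrow> (nat \<Rightarrow> nat) \<Rightarrow> 'a::comm_ring_1 mat" where
  "functional_laplacian n f = mat n n (\<lambda>(i, k). (if i = k then 1 else 0) - (if f i = k then 1 else 0))"

lemma reduced_laplacian_eq:
  "mat_delete (laplacian (Suc n) E) n n =
     mat n n (\<lambda>(i, k). \<Sum>j\<in>{0..<Suc n} - {i}. adj E i j * ((if i = k then 1 else 0) - (if j = k then 1 else 0)))"
  (is "_ = mat n n ?M")
proof (rule eq_matI)
  fix i k assume "i < dim_row (mat n n ?M)" "k < dim_col (mat n n ?M)"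
  then have ik: "i < n" "k < n" by auto
  have "?M (i, k) = (if i = k then (\<Sum>j\<in>{0..<Suc n} - {i}. adj E i j) else - adj E i k)"
  proof (cases "i = k")
    case True
    then show ?thesis by (auto intro!: sum.cong)
  next
    case False
    then have "?M (i, k) = - adj E i k" using ik by (simp add: sum_negf sum.delta' if_distrib[of "\<lambda>x. _ * x"] cong: if_cong)
    then show ?thesis using False by simp
  qed
  then show "mat_delete (laplacian (Suc n) E) n n $$ (i, k) = mat n n ?M $$ (i, k)"
    using ik by (simp add: mat_delete_def laplacian_def insert_index_def)
qed (simp_all add: mat_delete_def laplacian_def)

lemma det_functional_laplacian_leibniz:
  "det (functional_laplacian n f) = (\<Sum>p\<in>{p. p permutes {0..<n}}. signof p *
    (\<Prod>i = 0..<n. (if i = p i then 1 else 0) - (if f i = p i then 1 else 0)))"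
proof -
  have "det (functional_laplacian n f) =
      (\<Sum>p\<in>{p. p permutes {0..<n}}. signof p * (\<Prod>i = 0..<n. functional_laplacian n f $$ (i, p i)))"
    by (rule det_def') (simp add: functional_laplacian_def)
  also have "\<dots> = (\<Sum>p\<in>{p. p permutes {0..<n}}. signof p *
      (\<Prod>i = 0..<n. (if i = p i then 1 else 0) - (if f i = p i then 1 else 0)))"
    by (intro sum.cong refl arg_cong2[where f = "(*)"] prod.cong)
       (auto simp: functional_laplacian_def permutes_in_image)
  finally show ?thesis .
qed

text \<open>Expanding each row of the reduced Laplacian as a sum over the neighbours j of i
  (multilinearity of det) expresses its determinant as a sum over all parent choices.\<close>

lemma det_reduced_laplacian_expand:
  "det (mat_delete (laplacian (Suc n) E) n n) =
     (\<Sum>f\<in>(\<Pi>\<^sub>E i\<in>{0..<n}. {0..<Suc n} - {i}). (\<Prod>i = 0..<n. adj E i (f i)) * det (functional_laplacian n f))"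
proof -
  let ?B = "\<lambda>i. {0..<Suc n} - {i}"
  let ?P = "{p. p permutes {0..<n}}"
  let ?F = "\<Pi>\<^sub>E i\<in>{0..<n}. ?B i"
  let ?d = "\<lambda>p i j. (if i = p i then 1 else 0) - (if j = p i then 1 else 0)"
  have "det (mat_delete (laplacian (Suc n) E) n n) =
      (\<Sum>p\<in>?P. signof p * (\<Prod>i = 0..<n. \<Sum>j\<in>?B i. adj E i j * ?d p i j))"
    unfolding reduced_laplacian_eq
    by (subst det_def'[of _ n]) (auto intro!: sum.cong arg_cong2[where f = "(*)"] prod.cong
        simp: permutes_in_image)
  also have "\<dots> = (\<Sum>p\<in>?P. signof p * (\<Sum>f\<in>?F. \<Prod>i = 0..<n. adj E i (f i) * ?d p i (f i)))"
    by (subst prod_sum_PiE) auto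
  also have "\<dots> = (\<Sum>p\<in>?P. \<Sum>f\<in>?F. (\<Prod>i = 0..<n. adj E i (f i)) * (signof p * (\<Prod>i = 0..<n. ?d p i (f i))))"
    by (simp add: sum_distrib_left prod.distrib mult_ac)
  also have "\<dots> = (\<Sum>f\<in>?F. \<Sum>p\<in>?P. (\<Prod>i = 0..<n. adj E i (f i)) * (signof p * (\<Prod>i = 0..<n. ?d p i (f i))))"
    by (rule sum.swap)
  also have "\<dots> = (\<Sum>f\<in>?F. (\<Prod>i = 0..<n. adj E i (f i)) * det (functional_laplacian n f))"
    by (simp add: det_functional_laplacian_leibniz sum_distrib_left)
  finally show ?thesis .
qed

text \<open>For an acyclic f only the identity permutation contributes to the Leibniz formula: a
  nonvanishing term needs p i = f i wherever p moves i, so the points moved by p form an f-closed set.\<close>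

lemma det_functional_laplacian_acyclic:
  assumes f: "\<forall>i<n. f i \<noteq> i" and acyclic: "acyclic_map n f"
  shows "det (functional_laplacian n f) = 1"
proof -
  let ?P = "{p. p permutes {0..<n}}"
  let ?g = "\<lambda>p. signof p * (\<Prod>i = 0..<n. (if i = p i then 1 else 0) - (if f i = p i then 1 else 0)) :: 'a"
  have "?g p = 0" if "p \<in> ?P - {id}" for p
  proof (rule ccontr)
    assume nz: "?g p \<noteq> 0"
    from that have p: "p permutes {0..<n}" "p \<noteq> id" by auto
    have moved: "f i = p i" if "i < n" "p i \<noteq> i" for i
    proof (rule ccontr)
      assume "f i \<noteq> p i"
      then have "(\<Prod>i = 0..<n. (if i = p i then 1 else 0) - (if f i = p i then 1 else 0)) = (0 :: 'a)"
        using that by (intro prod_zero[OF _ bexI[of _ i]]) auto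
      with nz show False by simp
    qed
    define K where "K = {i \<in> {0..<n}. p i \<noteq> i}"
    have closed: "f y \<in> K" if y: "y \<in> K" for y
    proof -
      have "p (p y) \<noteq> p y"
      proof
        assume "p (p y) = p y"
        then have "p y = y" using injD[OF permutes_inj[OF p(1)]] by blast
        with y show False unfolding K_def by simp
      qed
      moreover have "p y \<in> {0..<n}" using y p(1) unfolding K_def by (simp add: permutes_in_image)
      ultimately show ?thesis using y moved unfolding K_def by auto
    qed
    have "K = {}" by (rule acyclic_mapD[OF acyclic _ closed]) (auto simp: K_def)
    moreover obtain x where "p x \<noteq> x" using p(2) by (auto simp: fun_eq_iff)
    moreover from this have "x \<in> {0..<n}" using p(1) unfolding permutes_def by blast
    ultimately show False unfolding K_def by blast
  qed
  then have "sum ?g (?P - {id}) = 0" by (intro sum.neutral) blast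
  moreover have "?g id = 1" using f by (simp add: sign_id)
  moreover have "sum ?g ?P = ?g id + sum ?g (?P - {id})"
    by (rule sum.remove) (simp_all add: finite_permutations permutes_id)
  ultimately show ?thesis unfolding det_functional_laplacian_leibniz by simp
qed

lemma not_acyclic_map_imp_permuted_subset:
  assumes "\<not> acyclic_map n f"
  obtains S where "S \<subseteq> {0..<n}" "S \<noteq> {}" "f ` S = S" "inj_on f S"
proof -
  define closed where "closed S \<longleftrightarrow> S \<subseteq> {0..<n} \<and> S \<noteq> {} \<and> f ` S \<subseteq> S" for S
  obtain S0 where "closed S0" using assms unfolding acyclic_map_def closed_def by blast
  then obtain S where S: "closed S" and S_min: "\<And>S'. closed S' \<Longrightarrow> card S \<le> card S'"
    using ex_has_least_nat[of closed S0 card] by blast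
  have "finite S" using S finite_subset unfolding closed_def by blast
  have "closed (f ` S)" using S unfolding closed_def by auto
  then have card_eq: "card (f ` S) = card S" using S_min card_image_le[OF \<open>finite S\<close>] le_antisym by blast
  have "f ` S = S" using card_subset_eq[OF \<open>finite S\<close> _ card_eq] S unfolding closed_def by blast
  moreover have "inj_on f S" using eq_card_imp_inj_on[OF \<open>finite S\<close> card_eq] .
  ultimately show thesis using S that unfolding closed_def by blast
qed

text \<open>If f has a cycle, f permutes some nonempty S, and the indicator vector of S lies in the kernel
  of the transposed matrix.\<close>

lemma det_functional_laplacian_not_acyclic:
  assumes "\<not> acyclic_map n f"
  shows "det (functional_laplacian n f :: 'a :: idom mat) = 0"
proof -
  obtain S where S_sub: "S \<subseteq> {0..<n}" and "S \<noteq> {}" and fS: "f ` S = S" and inj: "inj_on f S"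
    using not_acyclic_map_imp_permuted_subset[OF assms] .
  define v where "v = vec n (\<lambda>i. if i \<in> S then 1 else 0 :: 'a)"
  obtain x where "x \<in> S" using \<open>S \<noteq> {}\<close> by blast
  then have "v $ x = 1" "x < n" using S_sub unfolding v_def by auto
  then have "v \<noteq> 0\<^sub>v n" by (metis index_zero_vec(1) zero_neq_one)
  moreover have "transpose_mat (functional_laplacian n f) *\<^sub>v v = 0\<^sub>v n"
  proof (rule eq_vecI)
    fix k assume "k < dim_vec (0\<^sub>v n :: 'a vec)"
    then have k: "k < n" by simp
    have "(transpose_mat (functional_laplacian n f) *\<^sub>v v) $ k =
        (\<Sum>i\<in>{0..<n}. ((if i = k then 1 else 0) - (if f i = k then 1 else 0)) * (if i \<in> S then 1 else 0 :: 'a))"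
      using k by (simp add: functional_laplacian_def v_def scalar_prod_def)
    also have "\<dots> = (\<Sum>i\<in>{0..<n}. if i \<in> S then (if i = k then 1 else 0) - (if f i = k then 1 else 0) else 0)"
      by (intro sum.cong) auto
    also have "\<dots> = (\<Sum>i\<in>S. (if i = k then 1 else 0) - (if f i = k then 1 else 0))"
      using S_sub by (simp add: Int_absorb1 flip: sum.inter_restrict)
    also have "\<dots> = (\<Sum>i\<in>S. (if i = k then 1 else 0 :: 'a)) - (\<Sum>i\<in>S. (if f i = k then 1 else 0))"
      by (rule sum_subtractf)
    also have "(\<Sum>i\<in>S. (if f i = k then 1 else 0 :: 'a)) = (\<Sum>y\<in>f ` S. (if y = k then 1 else 0))"
      by (simp add: sum.reindex[OF inj])
    also have "\<dots> = (\<Sum>i\<in>S. (if i = k then 1 else 0))" unfolding fS ..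
    finally show "(transpose_mat (functional_laplacian n f) *\<^sub>v v) $ k = 0\<^sub>v n $ k" using k by simp
  qed (simp add: functional_laplacian_def)
  moreover have "v \<in> carrier_vec n" unfolding v_def by simp
  moreover have "functional_laplacian n f \<in> carrier_mat n n" by (simp add: functional_laplacian_def)
  ultimately show ?thesis
    using det_0_iff_vec_prod_zero det_transpose transpose_carrier_mat by metis
qed

theorem matrix_tree_theorem:
  assumes "simple_graph {0..<Suc n} E"
  shows "det (mat_delete (laplacian (Suc n) E) n n) = (of_nat (card {T. spanning_tree {0..<Suc n} E T}) :: 'a :: idom)"
proof -
  let ?F = "\<Pi>\<^sub>E i\<in>{0..<n}. {0..<Suc n} - {i}"
  have "(\<Prod>i = 0..<n. adj E i (f i)) * det (functional_laplacian n f) = (if f \<in> parent_maps n E then 1 else 0 :: 'a)"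
    if "f \<in> ?F" for f
  proof -
    have "(\<Prod>i = 0..<n. adj E i (f i)) = (if \<forall>i<n. {i, f i} \<in> E then 1 else 0 :: 'a)"
      by (auto simp: adj_def intro: prod_zero)
    moreover have "det (functional_laplacian n f) = (if acyclic_map n f then 1 else 0 :: 'a)"
      using det_functional_laplacian_acyclic[of n f] det_functional_laplacian_not_acyclic[of n f] that
      by (auto simp: PiE_iff)
    ultimately show ?thesis using that unfolding parent_maps_def by auto
  qed
  then have "det (mat_delete (laplacian (Suc n) E) n n) = (\<Sum>f\<in>?F. if f \<in> parent_maps n E then 1 else 0 :: 'a)"
    unfolding det_reduced_laplacian_expand by (rule sum.cong[OF refl])
  also have "\<dots> = of_nat (card (parent_maps n E))"
    by (simp add: finite_PiE parent_maps_def Int_absorb1 flip: sum.inter_filter)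
  finally show ?thesis unfolding card_spanning_trees_eq_card_parent_maps[OF assms] .
qed

section \<open>The Laplacian plus the all-ones matrix\<close>

lemma index_mult_mat_sum:
  assumes "A \<in> carrier_mat m l" "B \<in> carrier_mat l r" "i < m" "j < r"
  shows "(A * B) $$ (i, j) = (\<Sum>k<l. A $$ (i, k) * B $$ (k, j))"
  using assms by (auto simp: scalar_prod_def lessThan_atLeast0 intro!: sum.cong)

lemma det_unit_upper_triangular:
  assumes "A \<in> carrier_mat n n" "upper_triangular A" "\<And>i. i < n \<Longrightarrow> A $$ (i, i) = 1"
  shows "det A = 1"
proof -
  have "det A = prod_list (diag_mat A)" using det_upper_triangular assms(1,2) by blast
  also have "\<dots> = (\<Prod>i<n. A $$ (i, i))" using assms(1) by (simp add: prod_list_diag_prod lessThan_atLeast0)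
  also have "\<dots> = 1" using assms(3) by simp
  finally show ?thesis .
qed

definition add_cols_to_last :: "nat \<Rightarrow> 'a::comm_ring_1 mat" where
  "add_cols_to_last n = mat (Suc n) (Suc n) (\<lambda>(i, j). if j = n \<or> i = j then 1 else 0)"

lemma add_cols_to_last_carrier [simp]: "add_cols_to_last n \<in> carrier_mat (Suc n) (Suc n)"
  and dim_add_cols_to_last [simp]:
    "dim_row (add_cols_to_last n) = Suc n" "dim_col (add_cols_to_last n) = Suc n"
  by (simp_all add: add_cols_to_last_def)

lemma det_add_cols_to_last [simp]: "det (add_cols_to_last n) = 1"
  by (rule det_unit_upper_triangular) (auto simp: add_cols_to_last_def upper_triangular_def)

lemma index_mult_add_cols_to_last:
  assumes "A \<in> carrier_mat m (Suc n)" "i < m" "j < Suc n"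
  shows "(A * add_cols_to_last n) $$ (i, j) = (if j = n then \<Sum>k<Suc n. A $$ (i, k) else A $$ (i, j))"
proof -
  have "(A * add_cols_to_last n) $$ (i, j) =
      (\<Sum>k<Suc n. if j = n \<or> k = j then A $$ (i, k) else 0)"
    unfolding index_mult_mat_sum[OF assms(1) add_cols_to_last_carrier assms(2,3)]
    using assms(3) by (intro sum.cong refl) (auto simp: add_cols_to_last_def)
  also have "\<dots> = (if j = n then \<Sum>k<Suc n. A $$ (i, k) else A $$ (i, j))"
    using assms(3) by (simp add: sum.delta' del: sum.lessThan_Suc)
  finally show ?thesis .
qed

lemma index_border_sums:
  fixes A :: "'a::comm_ring_1 mat"
  assumes A: "A \<in> carrier_mat (Suc n) (Suc n)" and ij: "i < Suc n" "j < Suc n"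
  shows "(transpose_mat (add_cols_to_last n) * A * add_cols_to_last n) $$ (i, j) =
    (if i = n \<and> j = n then \<Sum>l<Suc n. \<Sum>k<Suc n. A $$ (k, l)
     else if i = n then \<Sum>k<Suc n. A $$ (k, j)
     else if j = n then \<Sum>l<Suc n. A $$ (i, l)
     else A $$ (i, j))"
proof -
  let ?S = "add_cols_to_last n :: 'a mat"
  have rows: "(transpose_mat ?S * A) $$ (i', j') = (if i' = n then \<Sum>k<Suc n. A $$ (k, j') else A $$ (i', j'))"
    if "i' < Suc n" "j' < Suc n" for i' j'
  proof -
    have "transpose_mat ?S * A = transpose_mat (transpose_mat A * ?S)"
      using A by (subst transpose_mult[of _ "Suc n" "Suc n" _ "Suc n"]) auto
    moreover have "(transpose_mat A * ?S) $$ (j', i') =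
        (if i' = n then \<Sum>k<Suc n. transpose_mat A $$ (j', k) else transpose_mat A $$ (j', i'))"
      using A that by (intro index_mult_add_cols_to_last) auto
    ultimately show ?thesis using that A by (simp del: index_mult_mat(1) sum.lessThan_Suc)
  qed
  have "transpose_mat ?S * A \<in> carrier_mat (Suc n) (Suc n)"
    using A by (metis add_cols_to_last_carrier mult_carrier_mat transpose_carrier_mat)
  then show ?thesis
    using ij by (simp add: index_mult_add_cols_to_last rows del: index_mult_mat(1) sum.lessThan_Suc)
qed

lemma det_border_sums:
  assumes "A \<in> carrier_mat (Suc n) (Suc n)"
  shows "det (transpose_mat (add_cols_to_last n) * A * add_cols_to_last n) = det A"
proof -
  let ?S = "add_cols_to_last n"
  have ST: "transpose_mat ?S \<in> carrier_mat (Suc n) (Suc n)" by simp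
  have "det (transpose_mat ?S * A * ?S) = det (transpose_mat ?S) * det A * det ?S"
    using det_mult[OF mult_carrier_mat[OF ST assms], of ?S] det_mult[OF ST assms] by simp
  then show ?thesis by (simp add: det_transpose[of _ "Suc n"])
qed

definition sub_from_rows_above :: "nat \<Rightarrow> 'a::comm_ring_1 \<Rightarrow> 'a mat" where
  "sub_from_rows_above n c =
    mat (Suc n) (Suc n) (\<lambda>(i, j). (if i = j then 1 else 0) - (if i < n \<and> j = n then c else 0))"

lemma sub_from_rows_above_carrier [simp]: "sub_from_rows_above n c \<in> carrier_mat (Suc n) (Suc n)"
  by (simp add: sub_from_rows_above_def)

lemma det_sub_from_rows_above [simp]: "det (sub_from_rows_above n c) = 1"
  by (rule det_unit_upper_triangular) (auto simp: sub_from_rows_above_def upper_triangular_def)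

lemma index_sub_from_rows_above_mult:
  assumes "B \<in> carrier_mat (Suc n) m" "i < Suc n" "j < m"
  shows "(sub_from_rows_above n c * B) $$ (i, j) = B $$ (i, j) - (if i < n then c * B $$ (n, j) else 0)"
proof -
  have "(sub_from_rows_above n c * B) $$ (i, j) =
      (\<Sum>k<Suc n. ((if i = k then 1 else 0) - (if i < n \<and> k = n then c else 0)) * B $$ (k, j))"
    unfolding index_mult_mat_sum[OF sub_from_rows_above_carrier assms(1) assms(2,3)] using assms(2)
    by (intro sum.cong refl) (simp add: sub_from_rows_above_def)
  also have "\<dots> = B $$ (i, j) - (if i < n then c * B $$ (n, j) else 0)"
    using assms(2) by (simp add: left_diff_distrib sum_subtractf if_distrib[of "\<lambda>c. c * _"] sum.delta
        del: sum.lessThan_Suc cong: if_cong)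
  finally show ?thesis .
qed

lemma det_last_column_zero:
  assumes X: "X \<in> carrier_mat (Suc n) (Suc n)" and zero: "\<And>i. i < n \<Longrightarrow> X $$ (i, n) = 0"
  shows "det X = X $$ (n, n) * det (mat_delete X n n)"
proof -
  have "det X = (\<Sum>i<Suc n. X $$ (i, n) * cofactor X i n)"
    by (rule laplace_expansion_column[OF X]) simp
  also have "\<dots> = X $$ (n, n) * cofactor X n n"
    using zero by (subst sum.mono_neutral_right[of "{..<Suc n}" "{n}"]) auto
  finally show ?thesis by (simp add: cofactor_def)
qed

text \<open>For L with vanishing row and column sums the border of L + J is N, ..., N, N^2; subtracting
  1/N times the last row from the others then clears the last column above the corner and turns
  L + J back into L.\<close>

lemma det_plus_ones_mat:
  fixes L :: "'a::field_char_0 mat"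
  assumes L: "L \<in> carrier_mat (Suc n) (Suc n)"
    and rows: "\<And>i. i < Suc n \<Longrightarrow> (\<Sum>k<Suc n. L $$ (i, k)) = 0"
    and cols: "\<And>k. k < Suc n \<Longrightarrow> (\<Sum>i<Suc n. L $$ (i, k)) = 0"
  shows "det (L + mat (Suc n) (Suc n) (\<lambda>_. 1)) = of_nat (Suc n) ^ 2 * det (mat_delete L n n)"
proof -
  define s :: 'a where "s = of_nat (Suc n)"
  define M where "M = L + mat (Suc n) (Suc n) (\<lambda>_. 1)"
  define B where "B = transpose_mat (add_cols_to_last n) * M * add_cols_to_last n"
  define X where "X = sub_from_rows_above n (1 / s) * B"
  have s: "s \<noteq> 0" unfolding s_def by (rule of_nat_neq_0)
  have M: "M \<in> carrier_mat (Suc n) (Suc n)" using L by (simp add: M_def)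
  have M_entry: "M $$ (i, j) = L $$ (i, j) + 1" if "i < Suc n" "j < Suc n" for i j
    using L that by (simp add: M_def)
  have M_rows: "(\<Sum>k<Suc n. M $$ (i, k)) = s" if "i < Suc n" for i
    using rows[OF that] that by (simp add: M_entry sum.distrib s_def del: sum.lessThan_Suc)
  have M_cols: "(\<Sum>i<Suc n. M $$ (i, k)) = s" if "k < Suc n" for k
    using cols[OF that] that by (simp add: M_entry sum.distrib s_def del: sum.lessThan_Suc)
  have B: "B \<in> carrier_mat (Suc n) (Suc n)"
    using M unfolding B_def by (metis add_cols_to_last_carrier mult_carrier_mat transpose_carrier_mat)
  have X: "X \<in> carrier_mat (Suc n) (Suc n)"
    unfolding X_def by (rule mult_carrier_mat[OF sub_from_rows_above_carrier B])
  have B_entry: "B $$ (i, j) = (if i = n \<and> j = n then s * s else if i = n \<or> j = n then s else M $$ (i, j))"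
    if "i < Suc n" "j < Suc n" for i j
    using that unfolding B_def index_border_sums[OF M that]
    by (simp add: M_rows M_cols s_def del: sum.lessThan_Suc)
  have X_entry: "X $$ (i, j) = (if i < n \<and> j < n then L $$ (i, j) else if i < n then 0 else B $$ (n, j))"
    if "i < Suc n" "j < Suc n" for i j
    using that s unfolding X_def index_sub_from_rows_above_mult[OF B that]
    by (auto simp: B_entry M_entry)
  have "det M = det X"
    unfolding X_def det_mult[OF sub_from_rows_above_carrier B] using det_border_sums[OF M] by (simp add: B_def)
  also have "\<dots> = X $$ (n, n) * det (mat_delete X n n)"
    by (rule det_last_column_zero[OF X]) (simp add: X_entry)
  also have "mat_delete X n n = mat_delete L n n"
    using X L by (intro eq_matI) (auto simp: mat_delete_def X_entry insert_index_def)
  finally show ?thesis using B_entry by (simp add: X_entry M_def s_def power2_eq_square)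
qed

lemma laplacian_carrier [simp]: "laplacian N E \<in> carrier_mat N N"
  by (simp add: laplacian_def)

lemma adj_sym: "adj E i j = adj E j i"
  by (simp add: adj_def insert_commute)

lemma laplacian_row_sum:
  assumes "i < N"
  shows "(\<Sum>k<N. laplacian N E $$ (i, k)) = (0 :: 'a::comm_ring_1)"
proof -
  have "(\<Sum>k<N. laplacian N E $$ (i, k)) =
      laplacian N E $$ (i, i) + (\<Sum>k\<in>{0..<N} - {i}. laplacian N E $$ (i, k))"
    using assms by (simp add: lessThan_atLeast0 sum.remove del: sum.lessThan_Suc)
  also have "\<dots> = (\<Sum>j\<in>{0..<N} - {i}. adj E i j) + (\<Sum>k\<in>{0..<N} - {i}. - adj E i k)"
    using assms by (simp add: laplacian_def)
  finally show ?thesis by (simp add: sum_negf)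
qed

lemma laplacian_col_sum:
  assumes "k < N"
  shows "(\<Sum>i<N. laplacian N E $$ (i, k)) = (0 :: 'a::comm_ring_1)"
proof -
  have "(\<Sum>i<N. laplacian N E $$ (i, k)) = (\<Sum>i<N. laplacian N E $$ (k, i) :: 'a)"
    using assms by (intro sum.cong) (auto simp: laplacian_def adj_sym)
  then show ?thesis using laplacian_row_sum[OF assms] by simp
qed

corollary det_laplacian_plus_ones:
  assumes "simple_graph {0..<Suc n} E"
  shows "det (laplacian (Suc n) E + mat (Suc n) (Suc n) (\<lambda>_. 1)) =
    (of_nat (Suc n) ^ 2 * of_nat (card {T. spanning_tree {0..<Suc n} E T}) :: 'a::field_char_0)"
  by (simp add: det_plus_ones_mat[OF laplacian_carrier laplacian_row_sum laplacian_col_sum]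
      matrix_tree_theorem[OF assms])

section \<open>Roots of unity and circulant matrices\<close>

definition omega :: "nat \<Rightarrow> complex" where
  "omega N = cis (2 * pi / real N)"

lemma omega_pow: "omega N ^ m = cis (2 * pi * real m / real N)"
  unfolding omega_def DeMoivre by (simp add: mult_ac)

lemma omega_pow_self: "0 < N \<Longrightarrow> omega N ^ N = 1"
  unfolding omega_pow by simp

lemma omega_pow_mod:
  assumes "0 < N"
  shows "omega N ^ (m mod N) = omega N ^ m"
proof -
  have "omega N ^ m = omega N ^ (m mod N + N * (m div N))" by simp
  also have "\<dots> = omega N ^ (m mod N)"
    by (simp only: power_add power_mult omega_pow_self[OF assms]) simp
  finally show ?thesis ..
qed

lemma omega_pow_mult_mod: "0 < N \<Longrightarrow> omega N ^ (a mod N * k) = omega N ^ (a * k)"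
  by (metis mod_mult_left_eq omega_pow_mod)

lemma inj_on_omega_pow: "0 < N \<Longrightarrow> inj_on (\<lambda>k. omega N ^ k) {..<N}"
  using bij_betw_roots_unity unfolding bij_betw_def omega_pow by blast

lemma norm_omega_pow [simp]: "norm (omega N ^ k) = 1"
  by (simp add: omega_pow)

lemma omega_pow_mult_cnj: "omega N ^ k * cnj (omega N ^ k) = 1"
  using complex_norm_square[of "omega N ^ k"] by simp

lemma prod_minus_omega_pow:
  assumes N: "0 < N"
  shows "(\<Prod>k<N. x - omega N ^ k) = x ^ N - 1"
proof -
  define p :: "complex poly" where "p = [:-1:] + monom 1 N"
  have p_eval: "poly p z = z ^ N - 1" for z unfolding p_def by (simp add: poly_monom)
  have "lead_coeff p = 1"
    using N unfolding p_def by (subst lead_coeff_add_le) (auto simp: degree_monom_eq)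
  moreover have "rsquarefree p"
    unfolding rsquarefree_roots
  proof (intro allI notI)
    fix a assume a: "poly p a = 0 \<and> poly (pderiv p) a = 0"
    then have "a \<noteq> 0" using N p_eval by (cases N) auto
    moreover have "poly (pderiv p) a = of_nat N * a ^ (N - 1)"
      unfolding p_def by (simp add: pderiv_add pderiv_monom poly_monom pderiv_pCons)
    ultimately have "poly (pderiv p) a \<noteq> 0" using N by simp
    with a show False by simp
  qed
  ultimately have "p = (\<Prod>z | poly p z = 0. [:-z, 1:])"
    using complex_poly_decompose_rsquarefree by (metis smult_1_left)
  then have "poly p x = (\<Prod>z | z ^ N = 1. x - z)" by (simp add: poly_prod p_eval)
  also have "\<dots> = (\<Prod>k<N. x - omega N ^ k)"
    by (rule prod.reindex_bij_betw[OF bij_betw_roots_unity[OF N], symmetric, unfolded omega_pow[symmetric]])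
  finally show ?thesis by (simp add: p_eval)
qed

lemma omega_pow_pred_mult:
  assumes N: "0 < N"
  shows "omega N ^ ((N - 1) * k) = cnj (omega N ^ k)"
proof -
  have "(N - 1) * k + k = N * k" using N by (cases N) auto
  then have "omega N ^ ((N - 1) * k) * omega N ^ k = omega N ^ (N * k)" by (simp flip: power_add)
  also have "\<dots> = 1" using omega_pow_self[OF N] by (simp add: power_mult)
  finally have inverse: "omega N ^ ((N - 1) * k) * omega N ^ k = 1" .
  have "omega N ^ ((N - 1) * k) = omega N ^ ((N - 1) * k) * (omega N ^ k * cnj (omega N ^ k))"
    by (simp only: omega_pow_mult_cnj mult_1_right)
  also have "\<dots> = cnj (omega N ^ k)" using inverse by (simp only: mult.assoc[symmetric] mult_1_left)
  finally show ?thesis .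
qed

lemma prod_plus_omega_pow:
  assumes "odd N"
  shows "(\<Prod>k<N. x + omega N ^ k) = x ^ N + 1"
proof -
  have N: "0 < N" using assms by (cases N) auto
  have "(-1) ^ N * (\<Prod>k<N. x + omega N ^ k) = (\<Prod>k<N. (-1) * (x + omega N ^ k))"
    by (simp only: prod.distrib prod_constant card_lessThan)
  also have "\<dots> = (\<Prod>k<N. - x - omega N ^ k)" by simp
  also have "\<dots> = (- x) ^ N - 1" by (rule prod_minus_omega_pow[OF N])
  finally show ?thesis using assms by (simp add: minus_equation_iff add.commute)
qed

definition dft_mat :: "nat \<Rightarrow> complex mat" where
  "dft_mat N = mat N N (\<lambda>(j, k). omega N ^ (j * k))"

lemma dft_mat_mult_conj:
  assumes N: "0 < N"
  shows "dft_mat N * map_mat cnj (dft_mat N) = of_nat N \<cdot>\<^sub>m 1\<^sub>m N"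
proof (rule eq_matI)
  fix i k assume "i < dim_row (of_nat N \<cdot>\<^sub>m 1\<^sub>m N :: complex mat)" "k < dim_col (of_nat N \<cdot>\<^sub>m 1\<^sub>m N :: complex mat)"
  then have ik: "i < N" "k < N" by auto
  define z where "z = omega N ^ i * cnj (omega N ^ k)"
  have "(dft_mat N * map_mat cnj (dft_mat N)) $$ (i, k) = (\<Sum>l<N. z ^ l)"
    using ik by (subst index_mult_mat_sum[of _ N N _ N])
      (auto simp: dft_mat_def z_def power_mult_distrib mult.commute intro!: sum.cong simp flip: power_mult)
  also have "\<dots> = (of_nat N \<cdot>\<^sub>m 1\<^sub>m N) $$ (i, k)"
  proof (cases "i = k")
    case True
    then have "z = 1" unfolding z_def by (simp only: omega_pow_mult_cnj)
    then show ?thesis using True ik by simp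
  next
    case False
    have "z \<noteq> 1"
    proof
      assume "z = 1"
      have "omega N ^ i = omega N ^ i * (omega N ^ k * cnj (omega N ^ k))"
        by (simp only: omega_pow_mult_cnj mult_1_right)
      also have "\<dots> = z * omega N ^ k" unfolding z_def by (simp only: mult_ac)
      finally have "omega N ^ i = omega N ^ k" using \<open>z = 1\<close> by simp
      then show False using False ik inj_onD[OF inj_on_omega_pow[OF N]] by auto
    qed
    moreover have "z ^ N = 1"
      unfolding z_def using omega_pow_self[OF N]
      by (simp add: power_mult_distrib flip: power_mult complex_cnj_power) (simp add: mult.commute power_mult)
    ultimately have "(\<Sum>l<N. z ^ l) = 0" by (simp add: geometric_sum)
    then show ?thesis using False ik by simp
  qed
  finally show "(dft_mat N * map_mat cnj (dft_mat N)) $$ (i, k) = (of_nat N \<cdot>\<^sub>m 1\<^sub>m N) $$ (i, k)" .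
qed (auto simp: dft_mat_def)

lemma det_dft_mat_nonzero:
  assumes N: "0 < N"
  shows "det (dft_mat N) \<noteq> 0"
proof
  assume "det (dft_mat N) = 0"
  moreover have "det (dft_mat N) * det (map_mat cnj (dft_mat N)) = of_nat N ^ N"
    using det_mult[of "dft_mat N" N "map_mat cnj (dft_mat N)"] dft_mat_mult_conj[OF N]
    by (simp add: dft_mat_def)
  ultimately show False using N by simp
qed

definition circulant :: "nat \<Rightarrow> (nat \<Rightarrow> 'a) \<Rightarrow> 'a mat" where
  "circulant N c = mat N N (\<lambda>(i, k). c ((k + N - i) mod N))"

lemma bij_betw_shift_mod:
  fixes i N :: nat
  assumes i: "i < N"
  shows "bij_betw (\<lambda>k. (k + N - i) mod N) {..<N} {..<N}"
proof (rule bij_betw_byWitness[where f' = "\<lambda>m. (m + i) mod N"])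
  show "\<forall>k\<in>{..<N}. ((k + N - i) mod N + i) mod N = k"
  proof
    fix k assume "k \<in> {..<N}"
    have "((k + N - i) mod N + i) mod N = (k + N - i + i) mod N" by (rule mod_add_left_eq)
    also have "\<dots> = k" using i \<open>k \<in> {..<N}\<close> by simp
    finally show "((k + N - i) mod N + i) mod N = k" .
  qed
  show "\<forall>m\<in>{..<N}. ((m + i) mod N + N - i) mod N = m"
  proof
    fix m assume "m \<in> {..<N}"
    have "((m + i) mod N + N - i) mod N = ((m + i) mod N + (N - i)) mod N" using i by simp
    also have "\<dots> = (m + i + (N - i)) mod N" by (rule mod_add_left_eq)
    also have "\<dots> = m" using i \<open>m \<in> {..<N}\<close> by simp
    finally show "((m + i) mod N + N - i) mod N = m" .
  qed
qed (use i in auto)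

lemma sum_shift_mod: "(i :: nat) < N \<Longrightarrow> (\<Sum>k<N. g ((k + N - i) mod N)) = (\<Sum>m<N. g m)"
  using sum.reindex_bij_betw[OF bij_betw_shift_mod] .

lemma index_circulant_mult_dft_mat:
  assumes N: "0 < N" and jk: "j < N" "k < N"
  shows "(circulant N c * dft_mat N) $$ (j, k) = omega N ^ (j * k) * (\<Sum>m<N. c m * omega N ^ (m * k))"
proof -
  have shift: "omega N ^ (l * k) = omega N ^ (j * k) * omega N ^ ((l + N - j) mod N * k)" if "l < N" for l
  proof -
    have "(j + (l + N - j) mod N) mod N = l" using jk that by (simp add: mod_add_right_eq)
    then have "omega N ^ (l * k) = omega N ^ ((j + (l + N - j) mod N) * k)"
      using omega_pow_mult_mod[OF N, of "j + (l + N - j) mod N" k] by simp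
    then show ?thesis by (simp add: add_mult_distrib power_add)
  qed
  have C: "circulant N c \<in> carrier_mat N N" and W: "dft_mat N \<in> carrier_mat N N"
    by (simp_all add: circulant_def dft_mat_def)
  have "(circulant N c * dft_mat N) $$ (j, k) = (\<Sum>l<N. c ((l + N - j) mod N) * omega N ^ (l * k))"
    unfolding index_mult_mat_sum[OF C W jk] using jk
    by (intro sum.cong refl) (simp add: circulant_def dft_mat_def)
  also have "\<dots> = omega N ^ (j * k) * (\<Sum>l<N. c ((l + N - j) mod N) * omega N ^ ((l + N - j) mod N * k))"
    unfolding sum_distrib_left by (intro sum.cong refl) (simp add: shift mult_ac)
  also have "\<dots> = omega N ^ (j * k) * (\<Sum>m<N. c m * omega N ^ (m * k))"
    unfolding sum_shift_mod[OF jk(1), of "\<lambda>m. c m * omega N ^ (m * k)"] ..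
  finally show ?thesis .
qed

lemma det_circulant:
  assumes N: "0 < N"
  shows "det (circulant N c) = (\<Prod>k<N. \<Sum>m<N. c m * omega N ^ (m * k))"
proof -
  define ev where "ev k = (\<Sum>m<N. c m * omega N ^ (m * k))" for k
  define D where "D = mat N N (\<lambda>(j, k). if j = k then ev k else 0)"
  have C: "circulant N c \<in> carrier_mat N N" and W: "dft_mat N \<in> carrier_mat N N"
    and D: "D \<in> carrier_mat N N"
    by (simp_all add: circulant_def dft_mat_def D_def)
  have "circulant N c * dft_mat N = dft_mat N * D"
  proof (rule eq_matI)
    fix j k assume "j < dim_row (dft_mat N * D)" "k < dim_col (dft_mat N * D)"
    then have jk: "j < N" "k < N" by (simp_all add: dft_mat_def D_def)
    have "(dft_mat N * D) $$ (j, k) = (\<Sum>l<N. if l = k then omega N ^ (j * k) * ev k else 0)"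
      unfolding index_mult_mat_sum[OF W D jk] using jk
      by (intro sum.cong refl) (simp add: dft_mat_def D_def)
    then show "(circulant N c * dft_mat N) $$ (j, k) = (dft_mat N * D) $$ (j, k)"
      using jk by (simp add: index_circulant_mult_dft_mat[OF N jk] ev_def)
  qed (simp_all add: circulant_def dft_mat_def D_def)
  then have "det (circulant N c) * det (dft_mat N) = det (dft_mat N) * det D"
    by (metis det_mult[OF C W] det_mult[OF W D])
  then have "det (circulant N c) = det D" using det_dft_mat_nonzero[OF N] by auto
  also have "det D = prod_list (diag_mat D)"
    by (rule det_upper_triangular[OF _ D]) (auto simp: D_def upper_triangular_def)
  also have "\<dots> = (\<Prod>k<N. ev k)" using D by (simp add: prod_list_diag_prod lessThan_atLeast0 D_def)
  finally show ?thesis unfolding ev_def .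
qed

section \<open>The graph G_{N,1}\<close>

lemma shift_mod_eq:
  fixes a b N :: nat
  assumes "a < N" "b < N"
  shows "(b + N - a) mod N = (if a \<le> b then b - a else b + N - a)"
proof (cases "a \<le> b")
  case True
  then have "b + N - a = (b - a) + N" by simp
  then have "(b + N - a) mod N = (b - a + N) mod N" by (simp only:)
  also have "\<dots> = b - a" using assms by simp
  finally show ?thesis using True by simp
next
  case False
  then show ?thesis using assms by simp
qed

lemma int_mod_shift:
  fixes a b N :: nat
  assumes "a < N"
  shows "(int b - int a) mod int N = int ((b + N - a) mod N)"
proof -
  have "int (b + N - a) = int b - int a + int N" using assms by simp
  then have "int ((b + N - a) mod N) = (int b - int a + int N) mod int N" by (simp only: of_nat_mod)
  also have "\<dots> = (int b - int a) mod int N" by (rule mod_add_self2)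
  finally show ?thesis ..
qed

lemma GN1_edge_iff:
  assumes ij: "i < N" "j < N" and N: "2 \<le> N"
  shows "{i, j} \<in> GN1_edges N \<longleftrightarrow> (j + N - i) mod N \<notin> {0, 1, N - 1}"
proof -
  define Q where "Q a b \<longleftrightarrow> (b + N - a) mod N \<notin> {0, 1, N - 1}" for a b
  have edge_cond: "(a \<noteq> b \<and> (int b - int a) mod int N \<noteq> 1 mod int N \<and> (int b - int a) mod int N \<noteq> (- 1) mod int N)
      \<longleftrightarrow> Q a b" if "a < N" "b < N" for a b
  proof -
    have "1 mod int N = int 1" "(- 1) mod int N = int (N - 1)" using N by (simp_all add: zmod_minus1 of_nat_diff)
    moreover have "a = b \<longleftrightarrow> (b + N - a) mod N = 0" using that by (auto simp: shift_mod_eq)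
    ultimately show ?thesis unfolding Q_def int_mod_shift[OF that(1)] of_nat_eq_iff by auto
  qed
  have Q_sym: "Q a b \<longleftrightarrow> Q b a" if "a < N" "b < N" for a b
    using that by (auto simp: Q_def shift_mod_eq)
  have "GN1_edges N = {{a, b} | a b. a < N \<and> b < N \<and> Q a b}"
    unfolding GN1_edges_def by (rule Collect_cong) (use edge_cond in blast)
  then have "{i, j} \<in> GN1_edges N \<longleftrightarrow> Q i j \<or> Q j i"
    using ij by (auto simp: doubleton_eq_iff)
  with Q_sym[OF ij] have "{i, j} \<in> GN1_edges N \<longleftrightarrow> Q i j" by blast
  then show ?thesis unfolding Q_def .
qed

lemma adj_GN1:
  assumes "i < N" "j < N" "2 \<le> N"
  shows "adj (GN1_edges N) i j = (if (j + N - i) mod N \<in> {0, 1, N - 1} then 0 else 1)"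
  using GN1_edge_iff[OF assms] by (simp add: adj_def)

lemma simple_graph_GN1: "simple_graph (GN1_vertices N) (GN1_edges N)"
  unfolding simple_graph_def GN1_vertices_def GN1_edges_def by auto

text \<open>The first row of L + J for G_{N,1}, i.e. of (N - 2) I plus the adjacency matrix of the N-cycle.\<close>

definition GN1_row :: "nat \<Rightarrow> nat \<Rightarrow> complex" where
  "GN1_row N m = (if m = 0 then of_nat N - 2 else if m = 1 \<or> m = N - 1 then 1 else 0)"

lemma GN1_row_eq:
  assumes "m < N" "3 \<le> N"
  shows "GN1_row N m = (of_nat N - 2) * (if m = 0 then 1 else 0) + (if m = 1 then 1 else 0) + (if m = N - 1 then 1 else 0)"
  using assms by (auto simp: GN1_row_def)

lemma laplacian_GN1_plus_ones:
  assumes N: "3 \<le> N"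
  shows "laplacian N (GN1_edges N) + mat N N (\<lambda>_. 1) = circulant N (GN1_row N)"
proof (rule eq_matI)
  fix i k assume "i < dim_row (circulant N (GN1_row N))" "k < dim_col (circulant N (GN1_row N))"
  then have ik: "i < N" "k < N" by (simp_all add: circulant_def)
  let ?adj = "\<lambda>m. if m \<in> {0, 1, N - 1} then 0 else 1 :: complex"
  have degree: "(\<Sum>j\<in>{0..<N} - {i}. adj (GN1_edges N) i j) = (of_nat N - 3 :: complex)"
  proof -
    have "(\<Sum>j\<in>{0..<N} - {i}. adj (GN1_edges N) i j) = (\<Sum>j<N. ?adj ((j + N - i) mod N) :: complex)"
      using ik N by (simp add: lessThan_atLeast0 sum.remove adj_GN1 del: sum.lessThan_Suc)
    also have "\<dots> = (\<Sum>m<N. ?adj m)" by (rule sum_shift_mod[OF ik(1)])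
    also have "\<dots> = (\<Sum>m<N. 1 - (if m = 0 then 1 else 0) - (if m = 1 then 1 else 0) - (if m = N - 1 then 1 else 0))"
      using N by (intro sum.cong) auto
    also have "\<dots> = of_nat N - 3" using N by (simp add: sum_subtractf sum.delta del: sum.lessThan_Suc)
    finally show ?thesis .
  qed
  show "(laplacian N (GN1_edges N) + mat N N (\<lambda>_. 1)) $$ (i, k) = circulant N (GN1_row N) $$ (i, k)"
  proof (cases "i = k")
    case True
    then show ?thesis using ik by (simp add: True[symmetric] laplacian_def circulant_def GN1_row_def degree)
  next
    case False
    then have "(k + N - i) mod N \<noteq> 0" using ik by (simp add: shift_mod_eq)
    then show ?thesis using False ik N by (simp add: laplacian_def circulant_def GN1_row_def adj_GN1)
  qed
qed (simp_all add: laplacian_def circulant_def)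

lemma GN1_row_eigenvalue:
  assumes N: "3 \<le> N"
  shows "(\<Sum>m<N. GN1_row N m * omega N ^ (m * k)) = of_nat N - 2 + omega N ^ k + cnj (omega N ^ k)"
proof -
  have "(\<Sum>m<N. GN1_row N m * omega N ^ (m * k)) =
      (\<Sum>m<N. (if m = 0 then (of_nat N - 2) * omega N ^ (m * k) else 0) + (if m = 1 then omega N ^ (m * k) else 0)
        + (if m = N - 1 then omega N ^ (m * k) else 0))"
    using N by (intro sum.cong) (auto simp: GN1_row_eq distrib_right)
  also have "\<dots> = of_nat N - 2 + omega N ^ k + omega N ^ ((N - 1) * k)"
    using N by (simp add: sum.distrib sum.delta del: sum.lessThan_Suc)
  finally show ?thesis using N omega_pow_pred_mult[of N k] by simp
qed

text \<open>With \<rho> + 1/\<rho> = N - 2 every eigenvalue factors as N - 2 + \<omega> + cnj \<omega> = (\<rho> + \<omega>) (\<rho> + cnj \<omega>) / \<rho>.\<close>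

lemma det_GN1_circulant:
  assumes "odd N" "3 \<le> N" and \<rho>: "\<rho>\<^sup>2 + 1 = (real N - 2) * \<rho>" "\<rho> \<noteq> 0"
  shows "det (circulant N (GN1_row N)) = (of_real \<rho> ^ N + 1)\<^sup>2 / of_real \<rho> ^ N"
proof -
  define r where "r = complex_of_real \<rho>"
  have "complex_of_real (\<rho>\<^sup>2 + 1) = complex_of_real ((real N - 2) * \<rho>)" using \<rho>(1) by simp
  then have r: "r\<^sup>2 + 1 = (of_nat N - 2) * r" "r \<noteq> 0" using \<rho>(2) unfolding r_def by simp_all
  have factor: "(of_nat N - 2 + omega N ^ k + cnj (omega N ^ k)) * r = (r + omega N ^ k) * (r + cnj (omega N ^ k))" for k
    using r(1) omega_pow_mult_cnj[of N k] by (simp add: algebra_simps power2_eq_square)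
  have prod: "(\<Prod>k<N. r + omega N ^ k) = r ^ N + 1" by (rule prod_plus_omega_pow[OF assms(1)])
  have "(\<Prod>k<N. r + cnj (omega N ^ k)) = cnj (\<Prod>k<N. r + omega N ^ k)"
    by (simp add: r_def)
  also have "\<dots> = r ^ N + 1" by (simp only: prod) (simp add: r_def)
  finally have prod_cnj: "(\<Prod>k<N. r + cnj (omega N ^ k)) = r ^ N + 1" .
  have "(\<Prod>k<N. of_nat N - 2 + omega N ^ k + cnj (omega N ^ k)) * r ^ N =
      (\<Prod>k<N. (of_nat N - 2 + omega N ^ k + cnj (omega N ^ k)) * r)"
    by (simp only: prod.distrib prod_constant card_lessThan)
  also have "\<dots> = (\<Prod>k<N. r + omega N ^ k) * (\<Prod>k<N. r + cnj (omega N ^ k))"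
    by (simp only: factor prod.distrib)
  also have "\<dots> = (r ^ N + 1)\<^sup>2" by (simp only: prod prod_cnj power2_eq_square)
  finally have "(\<Prod>k<N. of_nat N - 2 + omega N ^ k + cnj (omega N ^ k)) = (r ^ N + 1)\<^sup>2 / r ^ N"
    using r(2) by (simp add: eq_divide_eq)
  moreover have "det (circulant N (GN1_row N)) = (\<Prod>k<N. of_nat N - 2 + omega N ^ k + cnj (omega N ^ k))"
    using assms(2) det_circulant[of N "GN1_row N"] by (simp add: GN1_row_eigenvalue)
  ultimately show ?thesis by (simp add: r_def)
qed

lemma GN1_rho_quadratic:
  fixes N :: nat
  assumes "4 \<le> N"
  defines "\<rho> \<equiv> (real N - 2 + sqrt (real N * (real N - 4))) / 2"
  shows "\<rho>\<^sup>2 + 1 = (real N - 2) * \<rho>" and "0 < \<rho>"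
proof -
  define \<Delta> where "\<Delta> = sqrt (real N * (real N - 4))"
  have \<Delta>: "\<Delta>\<^sup>2 = real N * (real N - 4)" "0 \<le> \<Delta>" using assms(1) by (simp_all add: \<Delta>_def)
  have quadratic: "((x - 2 + d) / 2)\<^sup>2 + 1 - (x - 2) * ((x - 2 + d) / 2) = (d\<^sup>2 - (x - 2)\<^sup>2 + 4) / 4"
    for x d :: real
    by (simp add: power2_eq_square field_simps)
  have "\<rho>\<^sup>2 + 1 - (real N - 2) * \<rho> = (\<Delta>\<^sup>2 - (real N - 2)\<^sup>2 + 4) / 4"
    unfolding \<rho>_def \<Delta>_def[symmetric] by (rule quadratic)
  also have "\<dots> = 0" using \<Delta>(1) by (simp add: power2_eq_square algebra_simps)
  finally show "\<rho>\<^sup>2 + 1 = (real N - 2) * \<rho>" by simp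
  show "0 < \<rho>" using assms(1) \<Delta>(2) by (simp add: \<rho>_def \<Delta>_def[symmetric])
qed

theorem theorem4p2:
  fixes N :: nat
  assumes "odd N" and "N \<ge> 5"
  defines "\<Delta> \<equiv> sqrt (real N * (real N - 4))"
  defines "\<rho> \<equiv> (real N - 2 + \<Delta>) / 2"
  shows "real (num_spanning_trees (GN1_vertices N) (GN1_edges N)) =
           (1 / real N) * ((\<rho> ^ N + 1)\<^sup>2 / (\<rho> ^ (N - 1) * (\<rho> + 1)\<^sup>2))"
proof -
  obtain n where N: "N = Suc n" using assms(2) by (cases N) auto
  have \<rho>: "\<rho>\<^sup>2 + 1 = (real N - 2) * \<rho>" "0 < \<rho>"
    using GN1_rho_quadratic[of N] assms(2) unfolding \<rho>_def \<Delta>_def by simp_all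
  define \<tau> where "\<tau> = num_spanning_trees (GN1_vertices N) (GN1_edges N)"
  have "complex_of_nat N ^ 2 * of_nat \<tau> = det (laplacian N (GN1_edges N) + mat N N (\<lambda>_. 1))"
    unfolding \<tau>_def num_spanning_trees_def GN1_vertices_def N
    by (rule det_laplacian_plus_ones[symmetric]) (use simple_graph_GN1[of "Suc n"] in \<open>simp add: GN1_vertices_def\<close>)
  also have "\<dots> = det (circulant N (GN1_row N))" using assms(2) by (simp add: laplacian_GN1_plus_ones)
  also have "\<dots> = (of_real \<rho> ^ N + 1)\<^sup>2 / of_real \<rho> ^ N"
    by (rule det_GN1_circulant) (use assms(1,2) \<rho> in auto)
  finally have count: "real N ^ 2 * real \<tau> = (\<rho> ^ N + 1)\<^sup>2 / \<rho> ^ N"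
    by (metis (mono_tags) of_real_eq_iff of_real_divide of_real_power of_real_add of_real_1 of_real_mult of_real_of_nat_eq)
  have \<tau>: "real \<tau> = (\<rho> ^ N + 1)\<^sup>2 / \<rho> ^ N / real N ^ 2"
    by (rule eq_divide_imp) (use count N in \<open>simp_all add: mult.commute\<close>)
  have "(\<rho> + 1)\<^sup>2 = real N * \<rho>" using \<rho>(1) by (simp add: power2_eq_square algebra_simps)
  then have denominator: "\<rho> ^ (N - 1) * (\<rho> + 1)\<^sup>2 = real N * \<rho> ^ N" by (simp add: N mult_ac)
  show ?thesis unfolding \<tau>[unfolded \<tau>_def] denominator by (simp add: power2_eq_square mult_ac)
qed

end
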